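(* Let $E$ be a JB$^*$-triple in which tripotents are norm-total, and let $T:E\to E$ be a bounded linear map. The following are equivalent: (a) $T$ is a triple derivation; (b) for each tripotent $e\in E$, the map $(P_0(e)+P_2(e))T|_{E_0(e)\oplus E_2(e)}:E_0(e)\oplus E_2(e)\to E_0(e)\oplus E_2(e)$ is a triple derivation of the JB$^*$-subtriple $E_0(e)\oplus E_2(e)$; (c) for each tripotent $e\in E$, the map $P_2(e)T|_{E_2(e)}:E_2(e)\to E_2(e)$ is a triple derivation of $E_2(e)$ and $P_0(e)T(e)=0$.
   Context: A JB$^*$-triple is a complex Banach space $E$ with a continuous triple product $\{\cdot,\cdot,\cdot\}$, bilinear and symmetric in the outer variables and conjugate-linear in the middle one, satisfying the Jordan identity $L(a,b)L(x,y)=L(x,y)L(a,b)+L(L(a,b)x,y)-L(x,L(b,a)y)$, such that $L(a,a)$ is hermitian with non-negative spectrum and $\|\{a,a,a\}\|=\|a\|^3$, where $L(a,b)x=\{a,b,x\}$. Elements $a,b$ are orthogonal ($a\perp b$) if $L(a,b)=0$. A tripotent is $e\in E$ with $\{e,e,e\}=e$; it induces the Peirce decomposition $E=E_2(e)\oplus E_1(e)\oplus E_0(e)$, $E_j(e)=\{x:\{e,e,x\}=\tfrac j2 x\}$, with Peirce projections $P_j(e)$ onto $E_j(e)$; each $E_j(e)$ and $E_0(e)\oplus E_2(e)$ are JB$^*$-subtriples. Tripotents are norm-total in $E$ if every element of $E$ is a norm limit of finite linear combinations of mutually orthogonal tripotents. A linear map $\delta$ is a triple derivation if $\delta\{a,b,c\}=\{\delta(a),b,c\}+\{a,\delta(b),c\}+\{a,b,\delta(c)\}$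 for all $a,b,c$. *)

theory Defs
  imports "HOL-Analysis.Analysis"
begin

text \<open>A complex Banach space is modelled as a real Banach space 'a together with a
  real-linear map J (multiplication by the imaginary unit) with J (J x) = -x, such that
  the resulting complex scalar multiplication is absolutely homogeneous.\<close>

definition cscale :: "('a::real_vector \<Rightarrow> 'a) \<Rightarrow> complex \<Rightarrow> 'a \<Rightarrow> 'a" where
  "cscale J c x = Re c *\<^sub>R x + Im c *\<^sub>R J x"

definition complex_structure :: "('a::real_normed_vector \<Rightarrow> 'a) \<Rightarrow> bool" where
  "complex_structure J \<longleftrightarrow> linear J \<and> (\<forall>x. J (J x) = - x)
     \<and> (\<forall>c x. norm (cscale J c x) = cmod c * norm x)"

definition clin :: "('a::real_vector \<Rightarrow> 'a) \<Rightarrow> ('a \<Rightarrow> 'a) \<Rightarrow> bool" where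
  "clin J f \<longleftrightarrow> (\<forall>x y. f (x + y) = f x + f y) \<and> (\<forall>c x. f (cscale J c x) = cscale J c (f x))"

definition conjlin :: "('a::real_vector \<Rightarrow> 'a) \<Rightarrow> ('a \<Rightarrow> 'a) \<Rightarrow> bool" where
  "conjlin J f \<longleftrightarrow> (\<forall>x y. f (x + y) = f x + f y) \<and> (\<forall>c x. f (cscale J c x) = cscale J (cnj c) (f x))"

definition cstate :: "('a::real_normed_vector \<Rightarrow> 'a) \<Rightarrow> ('a \<Rightarrow> complex) \<Rightarrow> bool" where
  "cstate J f \<longleftrightarrow> bounded_linear f \<and> (\<forall>c x. f (cscale J c x) = c * f x) \<and> onorm f = 1"

definition num_range :: "('a::real_normed_vector \<Rightarrow> 'a) \<Rightarrow> ('a \<Rightarrow> 'a) \<Rightarrow> complex set" where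
  "num_range J T = {f (T x) | f x. norm x = 1 \<and> cstate J f \<and> f x = 1}"

definition hermitian :: "('a::real_normed_vector \<Rightarrow> 'a) \<Rightarrow> ('a \<Rightarrow> 'a) \<Rightarrow> bool" where
  "hermitian J T \<longleftrightarrow> bounded_linear T \<and> clin J T \<and> num_range J T \<subseteq> \<real>"

definition op_spectrum :: "('a::real_normed_vector \<Rightarrow> 'a) \<Rightarrow> ('a \<Rightarrow> 'a) \<Rightarrow> complex set" where
  "op_spectrum J T = {l. \<not> bij (\<lambda>x. T x - cscale J l x)}"

definition JBstar_triple :: "('a::banach \<Rightarrow> 'a) \<Rightarrow> ('a \<Rightarrow> 'a \<Rightarrow> 'a \<Rightarrow> 'a) \<Rightarrow> bool" where
  "JBstar_triple J tp \<longleftrightarrow>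
     complex_structure J
   \<and> (\<forall>b c. clin J (\<lambda>a. tp a b c))
   \<and> (\<forall>a c. conjlin J (\<lambda>b. tp a b c))
   \<and> (\<forall>a b c. tp a b c = tp c b a)
   \<and> continuous_on UNIV (\<lambda>(a, b, c). tp a b c)
   \<and> (\<forall>a b x y z. tp a b (tp x y z) = tp x y (tp a b z) + tp (tp a b x) y z - tp x (tp b a y) z)
   \<and> (\<forall>a. hermitian J (\<lambda>x. tp a a x))
   \<and> (\<forall>a. \<forall>l\<in>op_spectrum J (\<lambda>x. tp a a x). Im l = 0 \<and> Re l \<ge> 0)
   \<and> (\<forall>a. norm (tp a a a) = norm a ^ 3)"

definition tripotent :: "('a \<Rightarrow> 'a \<Rightarrow> 'a \<Rightarrow> 'a) \<Rightarrow> 'a \<Rightarrow> bool" where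
  "tripotent tp e \<longleftrightarrow> tp e e e = e"

definition orth :: "('a \<Rightarrow> 'a \<Rightarrow> 'a \<Rightarrow> 'a::zero) \<Rightarrow> 'a \<Rightarrow> 'a \<Rightarrow> bool" where
  "orth tp a b \<longleftrightarrow> (\<forall>z. tp a b z = 0)"

definition peirce_space :: "('a \<Rightarrow> 'a \<Rightarrow> 'a \<Rightarrow> 'a::real_vector) \<Rightarrow> nat \<Rightarrow> 'a \<Rightarrow> 'a set" where
  "peirce_space tp j e = {x. tp e e x = (real j / 2) *\<^sub>R x}"

text \<open>Peirce projections, via the standard formulas with Q(e)x = {e,x,e}:
  P_2 = Q(e)^2, P_1 = 2(L(e,e) - Q(e)^2), P_0 = Id - 2L(e,e) + Q(e)^2.\<close>
definition peirce_proj :: "('a \<Rightarrow> 'a \<Rightarrow> 'a \<Rightarrow> 'a::real_vector) \<Rightarrow> nat \<Rightarrow> 'a \<Rightarrow> 'a \<Rightarrow> 'a" where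
  "peirce_proj tp j e x =
     (if j = 2 then tp e (tp e x e) e
      else if j = 1 then 2 *\<^sub>R (tp e e x - tp e (tp e x e) e)
      else x - 2 *\<^sub>R tp e e x + tp e (tp e x e) e)"

definition norm_total_tripotents :: "('a::banach \<Rightarrow> 'a) \<Rightarrow> ('a \<Rightarrow> 'a \<Rightarrow> 'a \<Rightarrow> 'a) \<Rightarrow> bool" where
  "norm_total_tripotents J tp \<longleftrightarrow>
     UNIV \<subseteq> closure {(\<Sum>i\<in>F. cscale J (c i) (e i)) | F c e.
        finite (F :: nat set) \<and> (\<forall>i\<in>F. tripotent tp (e i))
        \<and> (\<forall>i\<in>F. \<forall>k\<in>F. i \<noteq> k \<longrightarrow> orth tp (e i) (e k))}"

definition triple_derivation_on :: "('a::real_vector \<Rightarrow> 'a) \<Rightarrow> ('a \<Rightarrow> 'a \<Rightarrow> 'a \<Rightarrow> 'a) \<Rightarrow> 'a set \<Rightarrow> ('a \<Rightarrow> 'a) \<Rightarrow> bool" where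
  "triple_derivation_on J tp S D \<longleftrightarrow>
     (\<forall>x\<in>S. D x \<in> S)
   \<and> (\<forall>x\<in>S. \<forall>y\<in>S. D (x + y) = D x + D y)
   \<and> (\<forall>c. \<forall>x\<in>S. D (cscale J c x) = cscale J c (D x))
   \<and> (\<forall>a\<in>S. \<forall>b\<in>S. \<forall>c\<in>S. D (tp a b c) = tp (D a) b c + tp a (D b) c + tp a b (D c))"

end

theory Submission
  imports Defs
begin

text \<open>
  With \<open>L = L(e,e)\<close> for a tripotent \<open>e\<close> one has \<open>2L\<^sup>3 - 3L\<^sup>2 + L = 0\<close>, so \<open>E\<close> splits into
  the eigenspaces \<open>E\<^sub>j(e)\<close> of \<open>L\<close> for the eigenvalues \<open>j/2\<close>, and the Jordan identity gives the
  Peirce rule \<open>{E\<^sub>i, E\<^sub>j, E\<^sub>k} \<subseteq> E\<^bsub>i-j+k\<^esub>\<close>. Hence \<open>P\<^sub>0 + P\<^sub>2\<close> and \<open>P\<^sub>2\<close> commute with the triple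
  product as soon as the other two arguments lie in \<open>E\<^sub>0 \<oplus> E\<^sub>2\<close> resp. \<open>E\<^sub>2\<close>, which gives
  (a) \<open>\<Rightarrow>\<close> (b), (c); the Leibniz rule at \<open>(e,e,e)\<close> gives \<open>P\<^sub>0(e) T e = 0\<close>. For \<open>e = 0\<close> condition
  (b) is (a) itself.

  For (c) \<open>\<Rightarrow>\<close> (a) consider the Leibniz defect
  \<open>D(a,b,c) = T{a,b,c} - {Ta,b,c} - {a,Tb,c} - {a,b,Tc}\<close>. For a finite family of mutually
  orthogonal tripotents \<open>e\<^sub>i\<close>, condition (c) applied to \<open>e\<^sub>i\<close>, \<open>e\<^sub>i + e\<^sub>k\<close> and \<open>e\<^sub>i + e\<^sub>j + e\<^sub>k\<close>
  shows \<open>D(e\<^sub>i,e\<^sub>j,e\<^sub>k) = 0\<close>, so \<open>D(x,x,x) = 0\<close> on their span. By continuity and norm-totality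
  \<open>D(x,x,x) = 0\<close> everywhere, and polarization (\<open>D\<close> is complex linear in the outer and
  conjugate linear in the middle variable) gives \<open>D = 0\<close>.
\<close>

lemma of_int_neq_half: "real_of_int n \<noteq> 1/2" "real_of_int n \<noteq> - 1/2"
proof -
  have "2 * n \<noteq> 1" "2 * n \<noteq> - 1" by presburger+
  then have "real_of_int (2 * n) \<noteq> 1" "real_of_int (2 * n) \<noteq> - 1" by linarith+
  then show "real_of_int n \<noteq> 1/2" "real_of_int n \<noteq> - 1/2" by auto
qed

declare One_nat_def [simp del] \<comment> \<open>keeps the Peirce index \<open>1\<close> a numeral\<close>

locale jb_triple =
  fixes J :: "'a::banach \<Rightarrow> 'a" and tp :: "'a \<Rightarrow> 'a \<Rightarrow> 'a \<Rightarrow> 'a"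
  assumes JBstar: "JBstar_triple J tp"
begin

lemma linear_J: "linear J"
  using JBstar unfolding JBstar_triple_def complex_structure_def by blast

lemma J_J [simp]: "J (J x) = - x"
  using JBstar unfolding JBstar_triple_def complex_structure_def by blast

lemma J_eq_0_iff [simp]: "J x = 0 \<longleftrightarrow> x = 0"
  by (metis J_J linear_J linear_0 neg_equal_0_iff_equal)

lemma tp_commute: "tp a b c = tp c b a"
  using JBstar unfolding JBstar_triple_def by blast

lemma jordan_identity:
  "tp a b (tp x y z) = tp x y (tp a b z) + tp (tp a b x) y z - tp x (tp b a y) z"
  using JBstar unfolding JBstar_triple_def by blast

lemma continuous_on_tp: "continuous_on UNIV (\<lambda>(a, b, c). tp a b c)"
  using JBstar unfolding JBstar_triple_def by blast

lemma tp_cscale_left: "tp (cscale J c a) b d = cscale J c (tp a b d)"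
  and tp_add_left: "tp (x + y) b d = tp x b d + tp y b d"
  using JBstar unfolding JBstar_triple_def clin_def by blast+

lemma tp_cscale_middle: "tp a (cscale J c b) d = cscale J (cnj c) (tp a b d)"
  and tp_add_middle: "tp a (x + y) d = tp a x d + tp a y d"
  using JBstar unfolding JBstar_triple_def conjlin_def by blast+

lemma tp_cscale_right: "tp a b (cscale J c d) = cscale J c (tp a b d)"
  by (metis tp_commute tp_cscale_left)

lemma cscale_of_real [simp]: "cscale J (complex_of_real r) x = r *\<^sub>R x"
  by (simp add: cscale_def)

lemma cscale_i [simp]: "cscale J \<i> x = J x" and cscale_minus_i [simp]: "cscale J (- \<i>) x = - J x"
  by (simp_all add: cscale_def)

lemma linear_cscale: "linear (cscale J c)"
  by (rule linearI) (simp_all add: cscale_def linear_add[OF linear_J] linear_scale[OF linear_J] algebra_simps)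

lemma linear_tp_left: "linear (\<lambda>a. tp a b c)"
  by (rule linearI) (simp_all add: tp_add_left tp_cscale_left[of "complex_of_real r" for r, simplified])

lemma linear_tp_middle: "linear (\<lambda>b. tp a b c)"
  by (rule linearI) (simp_all add: tp_add_middle tp_cscale_middle[of _ "complex_of_real r" for r, simplified])

lemma linear_tp_right: "linear (\<lambda>c. tp a b c)"
  using linear_tp_left by (subst tp_commute)

lemmas tp_linear_simps =
  linear_add[OF linear_tp_left] linear_add[OF linear_tp_middle] linear_add[OF linear_tp_right]
  linear_diff[OF linear_tp_left] linear_diff[OF linear_tp_middle] linear_diff[OF linear_tp_right]
  linear_scale[OF linear_tp_left] linear_scale[OF linear_tp_middle] linear_scale[OF linear_tp_right]
  linear_neg[OF linear_tp_left] linear_neg[OF linear_tp_middle] linear_neg[OF linear_tp_right]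
  linear_0[OF linear_tp_left] linear_0[OF linear_tp_middle] linear_0[OF linear_tp_right]

section \<open>Peirce decomposition\<close>

lemma tripotentD: "tripotent tp e \<Longrightarrow> tp e e e = e"
  by (simp add: tripotent_def)

lemma tripotent_Q_Q:
  assumes "tripotent tp e"
  shows "tp e (tp e w e) e = 2 *\<^sub>R tp e e (tp e e w) - tp e e w"
  using jordan_identity[of w e e e e] tp_commute[of w e e] tp_commute[of "tp e e w" e e]
  by (simp add: tripotentD[OF assms] algebra_simps scaleR_2)

lemma tripotent_L_Q:
  assumes "tripotent tp e"
  shows "tp e e (tp e w e) = tp e w e"
proof -
  have e: "tp e e e = e" using assms by (rule tripotentD)
  have Q_eq: "tp e w e - (2 *\<^sub>R tp e e (tp e w e) - tp e (tp e e w) e) = 0"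
    using jordan_identity[of e w e e e] tp_commute[of "tp e w e" e e] tp_commute[of w e e]
    by (simp add: e algebra_simps scaleR_2)
  have LQ_eq: "tp e e (tp e w e) - (2 *\<^sub>R tp e w e - tp e (tp e e w) e) = 0"
    using jordan_identity[of e e e w e] by (simp add: e algebra_simps scaleR_2)
  \<comment> \<open>the goal is a linear combination of the two identities; \<open>norm\<close> certifies linear identities\<close>
  have "tp e e (tp e w e) - tp e w e
      = (1/3) *\<^sub>R ((tp e e (tp e w e) - (2 *\<^sub>R tp e w e - tp e (tp e e w) e))
                 - (tp e w e - (2 *\<^sub>R tp e e (tp e w e) - tp e (tp e e w) e)))"
    by norm
  then show ?thesis using Q_eq LQ_eq by simp
qed

lemma tripotent_L_cubic:
  assumes "tripotent tp e"
  shows "2 *\<^sub>R tp e e (tp e e (tp e e w)) = 3 *\<^sub>R tp e e (tp e e w) - tp e e w"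
proof -
  have "2 *\<^sub>R tp e e (tp e e (tp e e w)) - tp e e (tp e e w) = 2 *\<^sub>R tp e e (tp e e w) - tp e e w"
    using tripotent_L_Q[OF assms, of "tp e w e"] by (simp add: tripotent_Q_Q[OF assms] tp_linear_simps)
  moreover have "2 *\<^sub>R tp e e (tp e e (tp e e w)) - (3 *\<^sub>R tp e e (tp e e w) - tp e e w)
      = (2 *\<^sub>R tp e e (tp e e (tp e e w)) - tp e e (tp e e w)) - (2 *\<^sub>R tp e e (tp e e w) - tp e e w)"
    by norm
  ultimately show ?thesis by simp
qed

lemma tripotent_eigenvector_eq_0:
  assumes "tripotent tp e" and x: "tp e e x = l *\<^sub>R x" and "l \<noteq> 0" "l \<noteq> 1/2" "l \<noteq> 1"
  shows "x = 0"
proof -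
  have "(2 * l^3) *\<^sub>R x = (3 * l^2 - l) *\<^sub>R x"
    using tripotent_L_cubic[OF assms(1), of x]
    by (simp add: x tp_linear_simps power3_eq_cube power2_eq_square scaleR_left_diff_distrib)
  then have "(2 * l^3 - (3 * l^2 - l)) *\<^sub>R x = 0"
    by (simp add: scaleR_left_diff_distrib)
  moreover have "2 * l^3 - (3 * l^2 - l) = l * (2 * l - 1) * (l - 1)"
    by (simp add: algebra_simps power3_eq_cube power2_eq_square)
  ultimately show ?thesis using assms(3-5) by simp
qed

lemma peirce_proj_L:
  assumes "tripotent tp e"
  shows "peirce_proj tp 2 e x = 2 *\<^sub>R tp e e (tp e e x) - tp e e x"
    and "peirce_proj tp 1 e x = 4 *\<^sub>R tp e e x - 4 *\<^sub>R tp e e (tp e e x)"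
    and "peirce_proj tp 0 e x = x - 3 *\<^sub>R tp e e x + 2 *\<^sub>R tp e e (tp e e x)"
  unfolding peirce_proj_def tripotent_Q_Q[OF assms] by (simp_all, norm+)

lemma peirce_proj_sum: "peirce_proj tp 0 e x + peirce_proj tp 1 e x + peirce_proj tp 2 e x = x"
  by (simp add: peirce_proj_def algebra_simps scaleR_2)

lemma linear_peirce_proj: "linear (peirce_proj tp j e)"
  by (rule linearI) (simp_all add: peirce_proj_def tp_linear_simps algebra_simps)

lemma peirce_proj_cscale: "peirce_proj tp j e (cscale J c x) = cscale J c (peirce_proj tp j e x)"
  by (simp add: peirce_proj_def tp_cscale_left tp_cscale_middle tp_cscale_right
      linear_diff[OF linear_cscale] linear_add[OF linear_cscale] linear_scale[OF linear_cscale])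

lemmas peirce_proj_linear_simps =
  linear_add[OF linear_peirce_proj] linear_diff[OF linear_peirce_proj]
  linear_scale[OF linear_peirce_proj] linear_0[OF linear_peirce_proj]

lemma peirce_proj_eigenvector:
  assumes e: "tripotent tp e" and x: "tp e e x = l *\<^sub>R x" and j: "j \<le> 2"
  shows "peirce_proj tp j e x = (if l = real j / 2 then x else 0)"
proof (cases "l = 0 \<or> l = 1/2 \<or> l = 1")
  case True
  have "peirce_proj tp 2 e x = (2 * l^2 - l) *\<^sub>R x"
    and "peirce_proj tp 1 e x = (4 * l - 4 * l^2) *\<^sub>R x"
    and "peirce_proj tp 0 e x = (1 - 3 * l + 2 * l^2) *\<^sub>R x"
    unfolding peirce_proj_L[OF e] by (simp_all add: x tp_linear_simps power2_eq_square algebra_simps)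
  moreover have "j = 0 \<or> j = 1 \<or> j = 2" using j by auto
  ultimately show ?thesis using True by (elim disjE) (simp_all add: power2_eq_square)
next
  case False
  then have "x = 0" using tripotent_eigenvector_eq_0[OF e x] by blast
  then show ?thesis by (simp add: peirce_proj_linear_simps)
qed

lemma peirce_space_0_iff [simp]: "x \<in> peirce_space tp 0 e \<longleftrightarrow> tp e e x = 0"
  and peirce_space_1_iff [simp]: "x \<in> peirce_space tp 1 e \<longleftrightarrow> tp e e x = (1/2) *\<^sub>R x"
  and peirce_space_2_iff [simp]: "x \<in> peirce_space tp 2 e \<longleftrightarrow> tp e e x = x"
  by (simp_all add: peirce_space_def)

lemma peirce_proj_in_peirce_space:
  assumes e: "tripotent tp e" and j: "j \<le> 2"
  shows "peirce_proj tp j e x \<in> peirce_space tp j e"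
proof -
  have cubic: "tp e e (tp e e (tp e e x)) = (3/2) *\<^sub>R tp e e (tp e e x) - (1/2) *\<^sub>R tp e e x"
  proof -
    have "tp e e (tp e e (tp e e x)) - ((3/2) *\<^sub>R tp e e (tp e e x) - (1/2) *\<^sub>R tp e e x)
        = (1/2) *\<^sub>R (2 *\<^sub>R tp e e (tp e e (tp e e x)) - (3 *\<^sub>R tp e e (tp e e x) - tp e e x))"
      by norm
    then show ?thesis using tripotent_L_cubic[OF e, of x] by simp
  qed
  have "peirce_proj tp 0 e x \<in> peirce_space tp 0 e"
    and "peirce_proj tp 1 e x \<in> peirce_space tp 1 e"
    and "peirce_proj tp 2 e x \<in> peirce_space tp 2 e"
    unfolding peirce_space_0_iff peirce_space_1_iff peirce_space_2_iff peirce_proj_L[OF e]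
    by (simp_all add: tp_linear_simps cubic; norm)+
  moreover have "j = 0 \<or> j = 1 \<or> j = 2" using j by auto
  ultimately show ?thesis by auto
qed

lemma peirce_rule:
  assumes "tp e e x = \<alpha> *\<^sub>R x" "tp e e y = \<beta> *\<^sub>R y" "tp e e z = \<gamma> *\<^sub>R z"
  shows "tp e e (tp x y z) = (\<alpha> - \<beta> + \<gamma>) *\<^sub>R tp x y z"
  using jordan_identity[of e e x y z] assms by (simp add: tp_linear_simps algebra_simps)

lemma peirce_proj_eigen:
  "tripotent tp e \<Longrightarrow> j \<le> 2 \<Longrightarrow> tp e e (peirce_proj tp j e x) = (real j / 2) *\<^sub>R peirce_proj tp j e x"
  using peirce_proj_in_peirce_space unfolding peirce_space_def by blast

lemma peirce_proj_fixes:
  "tripotent tp e \<Longrightarrow> j \<le> 2 \<Longrightarrow> x \<in> peirce_space tp j e \<Longrightarrow> peirce_proj tp j e x = x"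
  unfolding peirce_space_def by (simp add: peirce_proj_eigenvector[of e x "real j / 2"])

lemma peirce_proj_L_commute:
  assumes e: "tripotent tp e" and j: "j \<le> 2"
  shows "peirce_proj tp j e (tp e e x) = tp e e (peirce_proj tp j e x)"
proof -
  from j have "j = 0 \<or> j = 1 \<or> j = 2" by auto
  then show ?thesis by (elim disjE) (simp_all add: peirce_proj_L[OF e] tp_linear_simps)
qed

abbreviation peirce_space02 :: "'a \<Rightarrow> 'a set" where
  "peirce_space02 e \<equiv> {y + z |y z. y \<in> peirce_space tp 0 e \<and> z \<in> peirce_space tp 2 e}"

definition peirce_proj02 :: "'a \<Rightarrow> 'a \<Rightarrow> 'a" where
  "peirce_proj02 e x = peirce_proj tp 0 e x + peirce_proj tp 2 e x"

lemma peirce_proj02_add: "peirce_proj02 e (x + y) = peirce_proj02 e x + peirce_proj02 e y"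
  by (simp add: peirce_proj02_def peirce_proj_linear_simps)

lemma peirce_proj02_in_peirce_space02:
  "tripotent tp e \<Longrightarrow> peirce_proj02 e x \<in> peirce_space02 e"
  unfolding peirce_proj02_def using peirce_proj_in_peirce_space[of e 0] peirce_proj_in_peirce_space[of e 2]
  by blast

lemma peirce_proj02_eigenvector:
  assumes e: "tripotent tp e" and x: "tp e e x = l *\<^sub>R x"
  shows "peirce_proj02 e x = (if l = 1/2 then 0 else x)"
proof (cases "l = 0 \<or> l = 1/2 \<or> l = 1")
  case True
  then show ?thesis
    unfolding peirce_proj02_def using peirce_proj_eigenvector[OF e x, of 0] peirce_proj_eigenvector[OF e x, of 2]
    by auto
next
  case False
  then have "x = 0" using tripotent_eigenvector_eq_0[OF e x] by blast
  then show ?thesis by (simp add: peirce_proj02_def peirce_proj_linear_simps)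
qed

lemma peirce_proj02_commute:
  assumes e: "tripotent tp e" and f: "linear f"
    and shift: "\<And>k. k \<le> 2 \<Longrightarrow>
      \<exists>m::int. tp e e (f (peirce_proj tp k e y)) = (real k / 2 + of_int m) *\<^sub>R f (peirce_proj tp k e y)"
  shows "peirce_proj02 e (f y) = f (peirce_proj02 e y)"
proof -
  have fk: "peirce_proj02 e (f (peirce_proj tp k e y)) = (if k = 1 then 0 else f (peirce_proj tp k e y))"
    if k: "k \<le> 2" for k
  proof -
    obtain m :: int
      where m: "tp e e (f (peirce_proj tp k e y)) = (real k / 2 + of_int m) *\<^sub>R f (peirce_proj tp k e y)"
      using shift[OF k] by blast
    have "k = 0 \<or> k = 1 \<or> k = 2" using k by auto
    moreover have "f (peirce_proj tp k e y) = 0" if "k = 1" "m \<noteq> 0"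
      using tripotent_eigenvector_eq_0[OF e m] that of_int_neq_half[of "- m"] of_int_neq_half[of "1 - m"] by auto
    ultimately show ?thesis
      unfolding peirce_proj02_eigenvector[OF e m] using of_int_neq_half[of m] of_int_neq_half[of "- m"]
      by auto
  qed
  have "peirce_proj02 e (f y)
      = peirce_proj02 e (f (peirce_proj tp 0 e y) + f (peirce_proj tp 1 e y) + f (peirce_proj tp 2 e y))"
    by (simp add: linear_add[OF f, symmetric] peirce_proj_sum)
  also have "\<dots> = f (peirce_proj tp 0 e y) + f (peirce_proj tp 2 e y)"
    by (simp add: peirce_proj02_add fk)
  also have "\<dots> = f (peirce_proj02 e y)"
    by (simp add: peirce_proj02_def linear_add[OF f])
  finally show ?thesis .
qed

lemma peirce_space02_eigen:
  "x \<in> peirce_space tp 0 e \<union> peirce_space tp 2 e \<Longrightarrow> \<exists>n\<in>{0, 1::int}. tp e e x = of_int n *\<^sub>R x"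
  by auto

lemma peirce_proj02_tp_left:
  assumes e: "tripotent tp e" and b: "b \<in> peirce_space02 e" and c: "c \<in> peirce_space02 e"
  shows "peirce_proj02 e (tp y b c) = tp (peirce_proj02 e y) b c"
proof -
  have homogeneous: "peirce_proj02 e (tp y b' c') = tp (peirce_proj02 e y) b' c'"
    if b': "b' \<in> peirce_space tp 0 e \<union> peirce_space tp 2 e"
      and c': "c' \<in> peirce_space tp 0 e \<union> peirce_space tp 2 e" for b' c'
  proof (rule peirce_proj02_commute[OF e linear_tp_left])
    obtain \<beta> \<gamma> :: int where "tp e e b' = of_int \<beta> *\<^sub>R b'" and "tp e e c' = of_int \<gamma> *\<^sub>R c'"
      using peirce_space02_eigen[OF b'] peirce_space02_eigen[OF c'] by blast
    from peirce_rule[OF peirce_proj_eigen[OF e] this]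
    show "\<exists>m::int. tp e e (tp (peirce_proj tp k e y) b' c')
                  = (real k / 2 + of_int m) *\<^sub>R tp (peirce_proj tp k e y) b' c'" if "k \<le> 2" for k
      using that by (intro exI[of _ "\<gamma> - \<beta>"]) (simp add: algebra_simps)
  qed
  from b c obtain b0 b2 c0 c2 where "b = b0 + b2" "c = c0 + c2"
    and "b0 \<in> peirce_space tp 0 e" "b2 \<in> peirce_space tp 2 e"
    and "c0 \<in> peirce_space tp 0 e" "c2 \<in> peirce_space tp 2 e"
    by blast
  then show ?thesis by (simp add: tp_linear_simps peirce_proj02_add homogeneous)
qed

lemma peirce_proj02_tp_middle:
  assumes e: "tripotent tp e" and a: "a \<in> peirce_space02 e" and c: "c \<in> peirce_space02 e"
  shows "peirce_proj02 e (tp a y c) = tp a (peirce_proj02 e y) c"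
proof -
  have homogeneous: "peirce_proj02 e (tp a' y c') = tp a' (peirce_proj02 e y) c'"
    if a': "a' \<in> peirce_space tp 0 e \<union> peirce_space tp 2 e"
      and c': "c' \<in> peirce_space tp 0 e \<union> peirce_space tp 2 e" for a' c'
  proof (rule peirce_proj02_commute[OF e linear_tp_middle])
    obtain \<alpha> \<gamma> :: int where \<alpha>: "tp e e a' = of_int \<alpha> *\<^sub>R a'" and \<gamma>: "tp e e c' = of_int \<gamma> *\<^sub>R c'"
      using peirce_space02_eigen[OF a'] peirce_space02_eigen[OF c'] by blast
    show "\<exists>m::int. tp e e (tp a' (peirce_proj tp k e y) c')
                  = (real k / 2 + of_int m) *\<^sub>R tp a' (peirce_proj tp k e y) c'" if "k \<le> 2" for k
      using peirce_rule[OF \<alpha> peirce_proj_eigen[OF e that] \<gamma>]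
      by (intro exI[of _ "\<alpha> + \<gamma> - int k"]) (simp add: algebra_simps)
  qed
  from a c obtain a0 a2 c0 c2 where "a = a0 + a2" "c = c0 + c2"
    and "a0 \<in> peirce_space tp 0 e" "a2 \<in> peirce_space tp 2 e"
    and "c0 \<in> peirce_space tp 0 e" "c2 \<in> peirce_space tp 2 e"
    by blast
  then show ?thesis by (simp add: tp_linear_simps peirce_proj02_add homogeneous)
qed

lemma peirce_proj2_tp_left:
  assumes e: "tripotent tp e" and b: "b \<in> peirce_space tp 2 e" and c: "c \<in> peirce_space tp 2 e"
  shows "peirce_proj tp 2 e (tp y b c) = tp (peirce_proj tp 2 e y) b c"
proof -
  have Pk: "peirce_proj tp 2 e (tp (peirce_proj tp k e y) b c)
      = (if k = 2 then tp (peirce_proj tp k e y) b c else 0)" if "k \<le> 2" for k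
  proof -
    have "tp e e (tp (peirce_proj tp k e y) b c) = (real k / 2) *\<^sub>R tp (peirce_proj tp k e y) b c"
      using peirce_rule[OF peirce_proj_eigen[OF e that], of b 1 c 1] b c by simp
    from peirce_proj_eigenvector[OF e this, of 2] show ?thesis by auto
  qed
  have "peirce_proj tp 2 e (tp y b c) = peirce_proj tp 2 e
      (tp (peirce_proj tp 0 e y) b c + tp (peirce_proj tp 1 e y) b c + tp (peirce_proj tp 2 e y) b c)"
    by (simp add: tp_linear_simps(1)[symmetric] peirce_proj_sum)
  also have "\<dots> = tp (peirce_proj tp 2 e y) b c"
    by (simp add: peirce_proj_linear_simps Pk)
  finally show ?thesis .
qed

lemma tp_peirce_proj2_middle:
  assumes e: "tripotent tp e" and a: "a \<in> peirce_space tp 2 e" and c: "c \<in> peirce_space tp 2 e"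
  shows "tp a y c = tp a (peirce_proj tp 2 e y) c"
proof -
  have "tp a (peirce_proj tp k e y) c = 0" if "k = 0 \<or> k = 1" for k
  proof (rule tripotent_eigenvector_eq_0[OF e])
    show "tp e e (tp a (peirce_proj tp k e y) c) = (1 - real k / 2 + 1) *\<^sub>R tp a (peirce_proj tp k e y) c"
      using peirce_rule[OF _ peirce_proj_eigen[OF e], of a 1 k c 1] a c that by auto
  qed (use that in auto)
  moreover have "tp a y c = tp a (peirce_proj tp 0 e y) c + tp a (peirce_proj tp 1 e y) c
      + tp a (peirce_proj tp 2 e y) c"
    by (simp add: tp_linear_simps(2)[symmetric] peirce_proj_sum)
  ultimately show ?thesis by simp
qed

lemma peirce_proj2_tp_middle:
  assumes e: "tripotent tp e" and a: "a \<in> peirce_space tp 2 e" and c: "c \<in> peirce_space tp 2 e"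
  shows "peirce_proj tp 2 e (tp a y c) = tp a (peirce_proj tp 2 e y) c"
proof -
  have "tp a (peirce_proj tp 2 e y) c \<in> peirce_space tp 2 e"
    using peirce_rule[OF _ peirce_proj_eigen[OF e], of a 1 2 c 1] a c by simp
  then show ?thesis
    using tp_peirce_proj2_middle[OF assms] peirce_proj_fixes[OF e] by simp
qed

section \<open>Peirce compressions of a derivation\<close>

lemma clin_imp_linear: "clin J T \<Longrightarrow> linear T"
  unfolding clin_def by (rule linearI) (auto simp flip: cscale_of_real)

lemma triple_derivation_onD:
  "triple_derivation_on J tp S D \<Longrightarrow> a \<in> S \<Longrightarrow> b \<in> S \<Longrightarrow> c \<in> S
    \<Longrightarrow> D (tp a b c) = tp (D a) b c + tp a (D b) c + tp a b (D c)"
  unfolding triple_derivation_on_def by blast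

lemma triple_derivation_on_UNIV_clin:
  "triple_derivation_on J tp UNIV T \<Longrightarrow> clin J T"
  unfolding triple_derivation_on_def clin_def by blast

lemma triple_derivation_on_peirce_space02:
  assumes T: "triple_derivation_on J tp UNIV T" and e: "tripotent tp e"
  shows "triple_derivation_on J tp (peirce_space02 e) (\<lambda>x. peirce_proj02 e (T x))"
  unfolding triple_derivation_on_def
proof (intro conjI ballI allI)
  have T_clin: "clin J T" using T by (rule triple_derivation_on_UNIV_clin)
  fix x y c
  show "peirce_proj02 e (T x) \<in> peirce_space02 e"
    by (rule peirce_proj02_in_peirce_space02[OF e])
  show "peirce_proj02 e (T (x + y)) = peirce_proj02 e (T x) + peirce_proj02 e (T y)"
    using T_clin by (simp add: clin_def peirce_proj02_add)
  show "peirce_proj02 e (T (cscale J c x)) = cscale J c (peirce_proj02 e (T x))"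
    using T_clin
    by (simp add: clin_def peirce_proj02_def peirce_proj_cscale linear_add[OF linear_cscale])
next
  fix a b d assume abd: "a \<in> peirce_space02 e" "b \<in> peirce_space02 e" "d \<in> peirce_space02 e"
  have right: "peirce_proj02 e (tp a b z) = tp a b (peirce_proj02 e z)" for z
    using peirce_proj02_tp_left[OF e abd(2,1)] by (metis tp_commute)
  show "peirce_proj02 e (T (tp a b d))
      = tp (peirce_proj02 e (T a)) b d + tp a (peirce_proj02 e (T b)) d + tp a b (peirce_proj02 e (T d))"
    by (simp add: triple_derivation_onD[OF T] peirce_proj02_add right
        peirce_proj02_tp_left[OF e abd(2,3)] peirce_proj02_tp_middle[OF e abd(1,3)])
qed

lemma triple_derivation_on_peirce_space2:
  assumes T: "triple_derivation_on J tp UNIV T" and e: "tripotent tp e"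
  shows "triple_derivation_on J tp (peirce_space tp 2 e) (\<lambda>x. peirce_proj tp 2 e (T x))"
  unfolding triple_derivation_on_def
proof (intro conjI ballI allI)
  have T_clin: "clin J T" using T by (rule triple_derivation_on_UNIV_clin)
  fix x y c
  show "peirce_proj tp 2 e (T x) \<in> peirce_space tp 2 e"
    by (rule peirce_proj_in_peirce_space[OF e order_refl])
  show "peirce_proj tp 2 e (T (x + y)) = peirce_proj tp 2 e (T x) + peirce_proj tp 2 e (T y)"
    using T_clin by (simp add: clin_def peirce_proj_linear_simps)
  show "peirce_proj tp 2 e (T (cscale J c x)) = cscale J c (peirce_proj tp 2 e (T x))"
    using T_clin by (simp add: clin_def peirce_proj_cscale)
next
  fix a b d assume abd: "a \<in> peirce_space tp 2 e" "b \<in> peirce_space tp 2 e" "d \<in> peirce_space tp 2 e"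
  have right: "peirce_proj tp 2 e (tp a b z) = tp a b (peirce_proj tp 2 e z)" for z
    using peirce_proj2_tp_left[OF e abd(2,1)] by (metis tp_commute)
  show "peirce_proj tp 2 e (T (tp a b d))
      = tp (peirce_proj tp 2 e (T a)) b d + tp a (peirce_proj tp 2 e (T b)) d + tp a b (peirce_proj tp 2 e (T d))"
    by (simp add: triple_derivation_onD[OF T] peirce_proj_linear_simps right
        peirce_proj2_tp_left[OF e abd(2,3)] peirce_proj2_tp_middle[OF e abd(1,3)])
qed

lemma peirce_proj0_derivation_tripotent:
  assumes T: "triple_derivation_on J tp UNIV T" and e: "tripotent tp e"
  shows "peirce_proj tp 0 e (T e) = 0"
proof -
  have "T e = 2 *\<^sub>R tp e e (T e) + tp e (T e) e"
    using triple_derivation_onD[OF T, of e e e] tp_commute[of "T e" e e]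
    by (simp add: tripotentD[OF e] scaleR_2 algebra_simps)
  moreover have "peirce_proj tp 0 e (tp e e (T e)) = 0"
    using peirce_proj_in_peirce_space[OF e, of 0 "T e"] by (simp add: peirce_proj_L_commute[OF e])
  moreover have "peirce_proj tp 0 e (tp e (T e) e) = 0"
    using peirce_proj_eigenvector[OF e _, of "tp e (T e) e" 1 0] tripotent_L_Q[OF e] by simp
  ultimately show ?thesis by (metis add.right_neutral peirce_proj_linear_simps(1,3) scaleR_zero_right)
qed

lemma tripotent_0: "tripotent tp 0"
  by (simp add: tripotent_def tp_linear_simps)

lemma peirce_space02_0: "peirce_space02 0 = UNIV"
proof -
  have "x \<in> peirce_space tp 0 0" "0 \<in> peirce_space tp 2 0" for x
    by (simp_all add: tp_linear_simps)
  then show ?thesis by force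
qed

lemma peirce_proj02_0: "peirce_proj02 0 x = x"
  by (simp add: peirce_proj02_def peirce_proj_def tp_linear_simps)

section \<open>Orthogonal tripotents\<close>

lemma orthD: "orth tp a b \<Longrightarrow> tp a b z = 0" and orthD': "orth tp a b \<Longrightarrow> tp z b a = 0"
  unfolding orth_def by (metis tp_commute)+

lemma L_add_orth:
  "orth tp a c \<Longrightarrow> orth tp c a \<Longrightarrow> tp (a + c) (a + c) w = tp a a w + tp c c w"
  by (simp add: tp_linear_simps orthD)

lemma L_commute_orth: "orth tp c a \<Longrightarrow> tp a a (tp c c z) = tp c c (tp a a z)"
  using jordan_identity[of a a c c z] by (simp add: orthD' tp_linear_simps)

lemma tripotent_add_orth:
  assumes a: "tripotent tp a" and c: "tripotent tp c" and "orth tp a c" "orth tp c a"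
  shows "a \<in> peirce_space tp 2 (a + c)" and "c \<in> peirce_space tp 2 (a + c)" and "tripotent tp (a + c)"
proof -
  show "a \<in> peirce_space tp 2 (a + c)" and "c \<in> peirce_space tp 2 (a + c)"
    using assms by (simp_all add: L_add_orth orthD' tripotentD)
  then show "tripotent tp (a + c)"
    by (simp add: tripotent_def tp_linear_simps(3))
qed

lemma peirce_proj_commute:
  assumes e: "tripotent tp e" and M: "linear M" and comm: "\<And>x. M (tp e e x) = tp e e (M x)"
    and j: "j \<le> 2"
  shows "M (peirce_proj tp j e x) = peirce_proj tp j e (M x)"
proof -
  from j have "j = 0 \<or> j = 1 \<or> j = 2" by auto
  then show ?thesis
    by (elim disjE) (simp_all add: peirce_proj_L[OF e] linear_diff[OF M] linear_add[OF M]
        linear_scale[OF M] comm)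
qed

text \<open>In the next two lemmas \<open>L(a+c,a+c) = L(a,a) + L(c,c)\<close> with commuting summands, and
  a common eigenvector whose eigenvalue for \<open>L(a,a)\<close> or \<open>L(c,c)\<close> lies outside \<open>{0, 1/2, 1}\<close>
  vanishes.\<close>

lemma L_peirce_space0_add_orth:
  assumes a: "tripotent tp a" and c: "tripotent tp c" and o: "orth tp a c" "orth tp c a"
    and y: "y \<in> peirce_space tp 0 (a + c)"
  shows "tp a a y = 0"
proof -
  have comm: "tp (a + c) (a + c) (tp a a x) = tp a a (tp (a + c) (a + c) x)" for x
    unfolding L_add_orth[OF o] by (simp add: tp_linear_simps L_commute_orth[OF o(1)])
  have Lu: "tp (a + c) (a + c) (peirce_proj tp j a y) = 0" if "j \<le> 2" for j
    using peirce_proj_commute[OF a linear_tp_right comm that, of y] y by (simp add: peirce_proj_linear_simps)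
  have "peirce_proj tp 1 a y = 0"
  proof (rule tripotent_eigenvector_eq_0[OF c])
    show "tp c c (peirce_proj tp 1 a y) = (- 1/2) *\<^sub>R peirce_proj tp 1 a y"
      using Lu[of 1] peirce_proj_eigen[OF a, of 1 y] by (simp add: L_add_orth[OF o] eq_neg_iff_add_eq_0 add.commute)
  qed simp_all
  moreover have "peirce_proj tp 2 a y = 0"
  proof (rule tripotent_eigenvector_eq_0[OF c])
    show "tp c c (peirce_proj tp 2 a y) = (- 1) *\<^sub>R peirce_proj tp 2 a y"
      using Lu[of 2] peirce_proj_eigen[OF a, of 2 y] by (simp add: L_add_orth[OF o] eq_neg_iff_add_eq_0 add.commute)
  qed simp_all
  ultimately have "y = peirce_proj tp 0 a y"
    using peirce_proj_sum[of a y] by simp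
  then show ?thesis
    using peirce_proj_in_peirce_space[OF a, of 0 y] by simp
qed

lemma L_peirce_proj1_add_orth:
  assumes a: "tripotent tp a" and c: "tripotent tp c" and o: "orth tp a c" "orth tp c a"
    and z: "peirce_proj tp 0 c z = 0"
  shows "tp a a (peirce_proj tp 1 (a + c) z) = 0"
proof -
  have u: "tripotent tp (a + c)" using tripotent_add_orth[OF a c o] by blast
  have comm: "tp c c (tp (a + c) (a + c) x) = tp (a + c) (a + c) (tp c c x)" for x
    unfolding L_add_orth[OF o] by (simp add: tp_linear_simps L_commute_orth[OF o(1)])
  have P1_comm: "tp c c (peirce_proj tp 1 (a + c) x) = peirce_proj tp 1 (a + c) (tp c c x)" for x
    using peirce_proj_commute[OF u linear_tp_right comm, of 1] by simp
  have Lu: "tp (a + c) (a + c) (peirce_proj tp 1 (a + c) x) = (1/2) *\<^sub>R peirce_proj tp 1 (a + c) x" for x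
    using peirce_proj_eigen[OF u, of 1] by simp
  define v1 where "v1 = peirce_proj tp 1 (a + c) (peirce_proj tp 1 c z)"
  define v2 where "v2 = peirce_proj tp 1 (a + c) (peirce_proj tp 2 c z)"
  have "tp c c v1 = (1/2) *\<^sub>R v1"
    unfolding v1_def P1_comm using peirce_proj_eigen[OF c, of 1 z] by (simp add: peirce_proj_linear_simps)
  then have "tp a a v1 = 0"
    using Lu[of "peirce_proj tp 1 c z"] by (simp add: L_add_orth[OF o] v1_def)
  moreover have "v2 = 0"
  proof (rule tripotent_eigenvector_eq_0[OF a])
    have "tp c c v2 = v2"
      unfolding v2_def P1_comm using peirce_proj_eigen[OF c, of 2 z] by (simp add: peirce_proj_linear_simps)
    then have "tp a a v2 + v2 = (1/2) *\<^sub>R v2"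
      using Lu[of "peirce_proj tp 2 c z"] unfolding L_add_orth[OF o] v2_def[symmetric] by simp
    then have "tp a a v2 = (1/2) *\<^sub>R v2 - v2"
      by (simp add: eq_diff_eq)
    also have "\<dots> = (- 1/2) *\<^sub>R v2"
      by norm
    finally show "tp a a v2 = (- 1/2) *\<^sub>R v2" .
  qed simp_all
  moreover have "peirce_proj tp 1 (a + c) z = v1 + v2"
    using peirce_proj_sum[of c z] z unfolding v1_def v2_def by (metis add_0 peirce_proj_linear_simps(1))
  ultimately show ?thesis by (simp add: tp_linear_simps)
qed

section \<open>The Leibniz defect of a linear map\<close>

definition leibniz_defect :: "('a \<Rightarrow> 'a) \<Rightarrow> 'a \<Rightarrow> 'a \<Rightarrow> 'a \<Rightarrow> 'a" where
  "leibniz_defect T a b c = T (tp a b c) - tp (T a) b c - tp a (T b) c - tp a b (T c)"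

lemma triple_derivation_on_UNIV_iff:
  "clin J T \<Longrightarrow> triple_derivation_on J tp UNIV T \<longleftrightarrow> (\<forall>a b c. leibniz_defect T a b c = 0)"
  unfolding triple_derivation_on_def leibniz_defect_def clin_def by (auto simp: algebra_simps)

lemma leibniz_defect_orth_middle:
  assumes u: "tripotent tp u" and T: "linear T"
    and D2: "triple_derivation_on J tp (peirce_space tp 2 u) (\<lambda>x. peirce_proj tp 2 u (T x))"
    and abc: "a \<in> peirce_space tp 2 u" "b \<in> peirce_space tp 2 u" "c \<in> peirce_space tp 2 u"
    and o: "orth tp a b" "orth tp c b"
  shows "leibniz_defect T a b c = 0"
proof -
  have "peirce_proj tp 2 u (T (tp a b c)) = tp (peirce_proj tp 2 u (T a)) b c
      + tp a (peirce_proj tp 2 u (T b)) c + tp a b (peirce_proj tp 2 u (T c))"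
    by (rule triple_derivation_onD[OF D2 abc])
  then have "tp a (peirce_proj tp 2 u (T b)) c = 0"
    using o by (simp add: orthD orthD' linear_0[OF T] peirce_proj_linear_simps)
  then have "tp a (T b) c = 0"
    using tp_peirce_proj2_middle[OF u abc(1,3)] by simp
  then show ?thesis
    using o by (simp add: leibniz_defect_def orthD orthD' linear_0[OF T])
qed

lemma leibniz_defect_tripotent:
  assumes e: "tripotent tp e"
    and D2: "triple_derivation_on J tp (peirce_space tp 2 e) (\<lambda>x. peirce_proj tp 2 e (T x))"
    and P0: "peirce_proj tp 0 e (T e) = 0"
  shows "leibniz_defect T e e e = 0"
proof -
  define p1 where "p1 = peirce_proj tp 1 e (T e)"
  define p2 where "p2 = peirce_proj tp 2 e (T e)"
  have ee: "tp e e e = e" and e2: "e \<in> peirce_space tp 2 e"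
    using tripotentD[OF e] by simp_all
  have Lp2: "tp e e p2 = p2"
    using peirce_proj_in_peirce_space[OF e, of 2 "T e"] unfolding p2_def by simp
  have "p2 = tp p2 e e + tp e p2 e + tp e e p2"
    using triple_derivation_onD[OF D2 e2 e2 e2] unfolding ee p2_def .
  then have Qp2: "tp e p2 e = - p2"
    using Lp2 tp_commute[of p2 e e] by (simp add: eq_neg_iff_add_eq_0 add.commute)
  have Q: "tp e (T e) e = - p2"
    using tp_peirce_proj2_middle[OF e e2 e2, of "T e"] Qp2 unfolding p2_def by simp
  have Te: "T e = p1 + p2"
    using peirce_proj_sum[of e "T e"] P0 unfolding p1_def p2_def by simp
  have Lp1: "tp e e p1 = (1/2) *\<^sub>R p1"
    using peirce_proj_eigen[OF e, of 1 "T e"] unfolding p1_def by simp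
  have L: "tp e e (T e) = (1/2) *\<^sub>R p1 + p2"
    by (simp add: Te tp_linear_simps Lp1 Lp2)
  have "leibniz_defect T e e e = (p1 + p2) - ((1/2) *\<^sub>R p1 + p2) - (- p2) - ((1/2) *\<^sub>R p1 + p2)"
    unfolding leibniz_defect_def ee tp_commute[of "T e" e e] L Q by (simp only: Te)
  also have "\<dots> = 0"
    by norm
  finally show ?thesis .
qed

lemma leibniz_defect_orth_tripotents:
  assumes a: "tripotent tp a" and c: "tripotent tp c" and o: "orth tp a c" "orth tp c a"
    and T: "linear T"
    and D2: "triple_derivation_on J tp (peirce_space tp 2 (a + c)) (\<lambda>x. peirce_proj tp 2 (a + c) (T x))"
    and P0: "peirce_proj tp 0 c (T c) = 0"
  shows "leibniz_defect T a a c = 0"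
proof -
  note u = tripotent_add_orth[OF a c o]
  have "peirce_proj tp 2 (a + c) (T (tp a a c)) = tp (peirce_proj tp 2 (a + c) (T a)) a c
      + tp a (peirce_proj tp 2 (a + c) (T a)) c + tp a a (peirce_proj tp 2 (a + c) (T c))"
    by (rule triple_derivation_onD[OF D2 u(1) u(1) u(2)])
  then have sum0: "tp a (peirce_proj tp 2 (a + c) (T a)) c + tp a a (peirce_proj tp 2 (a + c) (T c)) = 0"
    using orthD'[OF o(2)] by (simp add: linear_0[OF T] peirce_proj_linear_simps)
  have "tp a a (peirce_proj tp 0 (a + c) (T c)) = 0"
    using L_peirce_space0_add_orth[OF a c o] peirce_proj_in_peirce_space[OF u(3), of 0] by simp
  moreover have "tp a a (peirce_proj tp 1 (a + c) (T c)) = 0"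
    by (rule L_peirce_proj1_add_orth[OF a c o P0])
  ultimately have "tp a a (T c) = tp a a (peirce_proj tp 2 (a + c) (T c))"
    using peirce_proj_sum[of "a + c" "T c"] by (metis add_0 tp_linear_simps(3))
  moreover have "tp a (T a) c = tp a (peirce_proj tp 2 (a + c) (T a)) c"
    by (rule tp_peirce_proj2_middle[OF u(3) u(1) u(2)])
  ultimately show ?thesis
    using sum0 orthD'[OF o(2)] by (simp add: leibniz_defect_def linear_0[OF T] neg_eq_iff_add_eq_0)
qed

lemma orth_sum_left:
  "finite G \<Longrightarrow> (\<And>g. g \<in> G \<Longrightarrow> orth tp (e g) b) \<Longrightarrow> orth tp (\<Sum>g\<in>G. e g) b"
  by (induction G rule: finite_induct) (auto simp: orth_def tp_linear_simps)

lemma orth_sum_right: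
  "finite G \<Longrightarrow> (\<And>g. g \<in> G \<Longrightarrow> orth tp b (e g)) \<Longrightarrow> orth tp b (\<Sum>g\<in>G. e g)"
  by (induction G rule: finite_induct) (auto simp: orth_def tp_linear_simps)

lemma tripotent_sum_orth:
  assumes "finite G" and trip: "\<And>g. g \<in> G \<Longrightarrow> tripotent tp (e g)"
    and orth: "\<And>g h. g \<in> G \<Longrightarrow> h \<in> G \<Longrightarrow> g \<noteq> h \<Longrightarrow> orth tp (e g) (e h)"
  shows "tripotent tp (\<Sum>g\<in>G. e g) \<and> (\<forall>g\<in>G. e g \<in> peirce_space tp 2 (\<Sum>g\<in>G. e g))"
  using assms
proof (induction G rule: finite_induct)
  case empty
  then show ?case by (simp add: tripotent_0)
next
  case (insert g G)
  let ?s = "\<Sum>h\<in>G. e h"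
  have o: "orth tp (e g) ?s" "orth tp ?s (e g)"
    using insert by (auto intro!: orth_sum_left orth_sum_right)
  have IH: "tripotent tp ?s" "\<forall>h\<in>G. e h \<in> peirce_space tp 2 ?s"
    using insert by auto
  note gs = tripotent_add_orth[OF insert.prems(1)[of g] IH(1) o]
  have "e h \<in> peirce_space tp 2 (e g + ?s)" if h: "h \<in> G" for h
  proof -
    have "orth tp (e h) (e g)"
      using insert.prems(2)[of h g] insert.hyps(2) h by auto
    then show ?thesis
      using IH(2) h by (simp add: L_add_orth[OF o] orthD')
  qed
  with gs show ?case
    using insert.hyps by simp
qed

definition peirce2_derivation_at :: "('a \<Rightarrow> 'a) \<Rightarrow> 'a \<Rightarrow> bool" where
  "peirce2_derivation_at T u \<longleftrightarrow>
     triple_derivation_on J tp (peirce_space tp 2 u) (\<lambda>x. peirce_proj tp 2 u (T x))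
     \<and> peirce_proj tp 0 u (T u) = 0"

lemma leibniz_defect_commute: "leibniz_defect T a b c = leibniz_defect T c b a"
  unfolding leibniz_defect_def by (simp add: tp_commute[of c] tp_commute[of "T c"] algebra_simps)

lemma leibniz_defect_orth_family:
  assumes T: "linear T" and der: "\<And>u. tripotent tp u \<Longrightarrow> peirce2_derivation_at T u"
    and "finite F" and trip: "\<And>i. i \<in> F \<Longrightarrow> tripotent tp (e i)"
    and orth: "\<And>i k. i \<in> F \<Longrightarrow> k \<in> F \<Longrightarrow> i \<noteq> k \<Longrightarrow> orth tp (e i) (e k)"
    and ijk: "i \<in> F" "j \<in> F" "k \<in> F"
  shows "leibniz_defect T (e i) (e j) (e k) = 0"
proof -
  have pair: "leibniz_defect T (e m) (e m) (e n) = 0" if "m \<in> F" "n \<in> F" "m \<noteq> n" for m n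
  proof (rule leibniz_defect_orth_tripotents[OF trip trip orth orth T])
    show "triple_derivation_on J tp (peirce_space tp 2 (e m + e n)) (\<lambda>x. peirce_proj tp 2 (e m + e n) (T x))"
      using der tripotent_add_orth[OF trip trip orth orth] that
      unfolding peirce2_derivation_at_def by blast
    show "peirce_proj tp 0 (e n) (T (e n)) = 0"
      using der[OF trip] that unfolding peirce2_derivation_at_def by blast
  qed (use that in auto)
  consider "i = j" "j = k" | "i = j" "j \<noteq> k" | "i \<noteq> j" "j = k" | "i \<noteq> j" "j \<noteq> k"
    by blast
  then show ?thesis
  proof cases
    case 1
    then show ?thesis
      using der[OF trip[OF ijk(1)]] leibniz_defect_tripotent[OF trip[OF ijk(1)]]
      unfolding peirce2_derivation_at_def by simp
  next
    case 2
    then show ?thesis using pair ijk by blast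
  next
    case 3
    then show ?thesis using pair[of j i] ijk leibniz_defect_commute by metis
  next
    case 4
    define u where "u = (\<Sum>g\<in>{i, j, k}. e g)"
    have u: "tripotent tp u" "\<forall>g\<in>{i, j, k}. e g \<in> peirce_space tp 2 u"
      using tripotent_sum_orth[of "{i, j, k}" e] trip orth ijk unfolding u_def by auto
    show ?thesis
    proof (rule leibniz_defect_orth_middle[OF u(1) T])
      show "triple_derivation_on J tp (peirce_space tp 2 u) (\<lambda>x. peirce_proj tp 2 u (T x))"
        using der[OF u(1)] unfolding peirce2_derivation_at_def by blast
    qed (use u 4 orth ijk in auto)
  qed
qed

lemma linear_leibniz_defect_left: "linear T \<Longrightarrow> linear (\<lambda>a. leibniz_defect T a b c)"
  and linear_leibniz_defect_middle: "linear T \<Longrightarrow> linear (\<lambda>b. leibniz_defect T a b c)"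
  unfolding leibniz_defect_def
  by (rule linearI; simp add: tp_linear_simps linear_add linear_scale algebra_simps)+

lemma leibniz_defect_cscale_left:
  "clin J T \<Longrightarrow> leibniz_defect T (cscale J k a) b c = cscale J k (leibniz_defect T a b c)"
  unfolding leibniz_defect_def clin_def
  by (simp add: tp_cscale_left linear_diff[OF linear_cscale])

lemma leibniz_defect_cscale_middle:
  "clin J T \<Longrightarrow> leibniz_defect T a (cscale J k b) c = cscale J (cnj k) (leibniz_defect T a b c)"
  unfolding leibniz_defect_def clin_def
  by (simp add: tp_cscale_left tp_cscale_middle tp_cscale_right linear_diff[OF linear_cscale])

lemma sum_cscale_vanishes:
  assumes add: "\<And>x y. f (x + y) = f x + f y" and scale: "\<And>k x. f (cscale J k x) = cscale J (g k) (f x)"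
    and "finite F" and zero: "\<And>i. i \<in> F \<Longrightarrow> f (e i) = 0"
  shows "f (\<Sum>i\<in>F. cscale J (c i) (e i)) = 0"
  using \<open>finite F\<close> zero
proof (induction F rule: finite_induct)
  case empty
  have "f 0 = f 0 + f 0" using add[of 0 0] by simp
  then show ?case by simp
next
  case (insert i F)
  then show ?case by (simp add: add scale linear_0[OF linear_cscale])
qed

lemma leibniz_defect_orth_sum:
  assumes T: "clin J T" and der: "\<And>u. tripotent tp u \<Longrightarrow> peirce2_derivation_at T u"
    and F: "finite F" and trip: "\<And>i. i \<in> F \<Longrightarrow> tripotent tp (e i)"
    and orth: "\<And>i k. i \<in> F \<Longrightarrow> k \<in> F \<Longrightarrow> i \<noteq> k \<Longrightarrow> orth tp (e i) (e k)"
    and x: "x = (\<Sum>i\<in>F. cscale J (c i) (e i))"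
  shows "leibniz_defect T x x x = 0"
proof -
  have lin: "linear T" using T by (rule clin_imp_linear)
  note family = leibniz_defect_orth_family[OF lin der F trip orth]
  have left: "leibniz_defect T x b d = 0" if "\<And>i. i \<in> F \<Longrightarrow> leibniz_defect T (e i) b d = 0" for b d
    unfolding x using linear_add[OF linear_leibniz_defect_left[OF lin]] leibniz_defect_cscale_left[OF T] F that
    by (rule sum_cscale_vanishes)
  have middle: "leibniz_defect T a x d = 0" if "\<And>i. i \<in> F \<Longrightarrow> leibniz_defect T a (e i) d = 0" for a d
    unfolding x using linear_add[OF linear_leibniz_defect_middle[OF lin]] leibniz_defect_cscale_middle[OF T] F that
    by (rule sum_cscale_vanishes)
  have "leibniz_defect T x x (e k) = 0" if "k \<in> F" for k
    using family that by (intro middle left) auto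
  then have "leibniz_defect T (e k) x x = 0" if "k \<in> F" for k
    using that leibniz_defect_commute by metis
  then show ?thesis
    using left by blast
qed

lemma continuous_on_leibniz_defect_diagonal:
  assumes "bounded_linear T"
  shows "continuous_on UNIV (\<lambda>x. leibniz_defect T x x x)"
proof -
  have T: "continuous_on UNIV T" using assms by (rule linear_continuous_on)
  have tp: "continuous_on UNIV (\<lambda>x. tp (f x) (g x) (h x))"
    if "continuous_on UNIV f" "continuous_on UNIV g" "continuous_on UNIV h" for f g h :: "'a \<Rightarrow> 'a"
    using continuous_on_compose2[OF continuous_on_tp, of UNIV "\<lambda>x. (f x, g x, h x)"] that
    by (simp add: continuous_on_Pair)
  show ?thesis
    unfolding leibniz_defect_def
    by (intro continuous_on_diff tp continuous_on_id T continuous_on_compose2[OF T tp]) auto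
qed

lemma leibniz_defect_polarization:
  assumes T: "clin J T" and diag: "\<And>x. leibniz_defect T x x x = 0"
  shows "leibniz_defect T a b c = 0"
proof -
  have lin: "linear T" using T by (rule clin_imp_linear)
  note left = linear_leibniz_defect_left[OF lin] and middle = linear_leibniz_defect_middle[OF lin]
  have right: "linear (\<lambda>c. leibniz_defect T a b c)" for a b
    using left by (subst leibniz_defect_commute)
  let ?D = "leibniz_defect T"
  have cross: "2 *\<^sub>R ?D b a a + ?D a b a = 0" for a b
  proof -
    have "?D (a + b) (a + b) (a + b) - ?D (a - b) (a - b) (a - b)
        = 2 *\<^sub>R (2 *\<^sub>R ?D b a a + ?D a b a) + 2 *\<^sub>R ?D b b b"
      using leibniz_defect_commute[of T a a b]
      by (simp add: linear_add[OF left] linear_add[OF middle] linear_add[OF right]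
          linear_diff[OF left] linear_diff[OF middle] linear_diff[OF right] algebra_simps scaleR_2)
    then show ?thesis by (simp add: diag)
  qed
  have outer: "?D b a a = 0" for a b
  proof -
    \<comment> \<open>replacing \<open>b\<close> by \<open>J b\<close> multiplies the first term by \<open>J\<close> and the second by \<open>-J\<close>\<close>
    have "J (2 *\<^sub>R ?D b a a - ?D a b a) = 0"
      using cross[where a=a and b="J b"] leibniz_defect_cscale_left[OF T, of \<i> b a a]
        leibniz_defect_cscale_middle[OF T, of a \<i> b a]
      by (simp add: linear_diff[OF linear_J] linear_scale[OF linear_J])
    moreover have "4 *\<^sub>R ?D b a a = (2 *\<^sub>R ?D b a a - ?D a b a) + (2 *\<^sub>R ?D b a a + ?D a b a)"
      by norm
    ultimately show ?thesis
      using cross[where a=a and b=b] by simp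
  qed
  have diag_outer: "?D x x d = 0" for x d
    using outer[where b=d and a=x] leibniz_defect_commute[of T x x d] by simp
  have swap: "?D x y d + ?D y x d = 0" for x y d
    using diag_outer[of "x + y" d] diag_outer[of x d] diag_outer[of y d]
    by (simp add: linear_add[OF left] linear_add[OF middle] algebra_simps)
  have "J (?D b a c - ?D a b c) = 0"
    using swap[of a "J b" c] leibniz_defect_cscale_left[OF T, of \<i> b a c]
      leibniz_defect_cscale_middle[OF T, of a \<i> b c]
    by (simp add: linear_diff[OF linear_J] algebra_simps)
  moreover have "2 *\<^sub>R ?D a b c = (?D a b c + ?D b a c) - (?D b a c - ?D a b c)"
    by norm
  ultimately show ?thesis
    using swap[of a b c] by simp
qed

lemma triple_derivation_if_peirce2_derivations:
  assumes nt: "norm_total_tripotents J tp" and bT: "bounded_linear T" and T: "clin J T"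
    and der: "\<And>u. tripotent tp u \<Longrightarrow> peirce2_derivation_at T u"
  shows "triple_derivation_on J tp UNIV T"
proof -
  let ?M = "{(\<Sum>i\<in>F. cscale J (c i) (e i)) | F c e.
        finite (F :: nat set) \<and> (\<forall>i\<in>F. tripotent tp (e i))
        \<and> (\<forall>i\<in>F. \<forall>k\<in>F. i \<noteq> k \<longrightarrow> orth tp (e i) (e k))}"
  have "?M \<subseteq> {x. leibniz_defect T x x x = 0}"
    using leibniz_defect_orth_sum[OF T der] by blast
  moreover have "closed {x. leibniz_defect T x x x = 0}"
    using closed_Collect_eq[OF continuous_on_leibniz_defect_diagonal[OF bT] continuous_on_const] by simp
  ultimately have "closure ?M \<subseteq> {x. leibniz_defect T x x x = 0}"
    by (rule closure_minimal)
  with nt have "leibniz_defect T x x x = 0" for x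
    unfolding norm_total_tripotents_def by blast
  then show ?thesis
    using triple_derivation_on_UNIV_iff[OF T] leibniz_defect_polarization[OF T] by blast
qed

end

theorem mainTheorem3:
  fixes J :: "'a::banach \<Rightarrow> 'a" and tp :: "'a \<Rightarrow> 'a \<Rightarrow> 'a \<Rightarrow> 'a" and T :: "'a \<Rightarrow> 'a"
  assumes "JBstar_triple J tp"
    and "norm_total_tripotents J tp"
    and "bounded_linear T" and "clin J T"
  shows "(triple_derivation_on J tp UNIV T
          \<longleftrightarrow> (\<forall>e. tripotent tp e \<longrightarrow>
                 triple_derivation_on J tp
                   {y + z | y z. y \<in> peirce_space tp 0 e \<and> z \<in> peirce_space tp 2 e}
                   (\<lambda>x. peirce_proj tp 0 e (T x) + peirce_proj tp 2 e (T x))))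
       \<and> (triple_derivation_on J tp UNIV T
          \<longleftrightarrow> (\<forall>e. tripotent tp e \<longrightarrow>
                 triple_derivation_on J tp (peirce_space tp 2 e) (\<lambda>x. peirce_proj tp 2 e (T x))
                 \<and> peirce_proj tp 0 e (T e) = 0))"
proof -
  interpret jb_triple J tp by (rule jb_triple.intro) (rule assms(1))
  have a_iff_b: "triple_derivation_on J tp UNIV T \<longleftrightarrow>
      (\<forall>e. tripotent tp e \<longrightarrow> triple_derivation_on J tp (peirce_space02 e) (\<lambda>x. peirce_proj02 e (T x)))"
  proof
    assume "\<forall>e. tripotent tp e \<longrightarrow> triple_derivation_on J tp (peirce_space02 e) (\<lambda>x. peirce_proj02 e (T x))"
    then have "triple_derivation_on J tp (peirce_space02 0) (\<lambda>x. peirce_proj02 0 (T x))"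
      using tripotent_0 by blast
    then show "triple_derivation_on J tp UNIV T"
      unfolding peirce_space02_0 peirce_proj02_0 .
  qed (use triple_derivation_on_peirce_space02 in blast)
  have a_iff_c: "triple_derivation_on J tp UNIV T \<longleftrightarrow> (\<forall>e. tripotent tp e \<longrightarrow> peirce2_derivation_at T e)"
    using triple_derivation_on_peirce_space2 peirce_proj0_derivation_tripotent
      triple_derivation_if_peirce2_derivations[OF assms(2-4)]
    unfolding peirce2_derivation_at_def by blast
  show ?thesis
    using a_iff_b a_iff_c unfolding peirce_proj02_def peirce2_derivation_at_def by blast
qed

end
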